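(* Let $(F,\cdot)$ be a scalar group. (1) If $(F,\boxplus,\cdot)$ is a left near-field, then the map $\rho_\boxplus:F\to F$, $\rho_\boxplus(\alpha)=1\boxplus\alpha$, is a left near-field addition map on $(F,\cdot)$. (2) If $\rho$ is a left near-field addition map on $(F,\cdot)$, then $(F,\boxplus_\rho,\cdot)$ is a left near-field, where $\alpha\boxplus_\rho\beta:=\alpha\,\rho(\alpha^{-1}\beta)$ if $\alpha\ne0$ and $0\boxplus_\rho\beta:=\beta$.
   Context: A scalar group is a tuple $(F,\cdot,1,0,-1)$ where $(F,\cdot,1)$ is a monoid, $0\ne1$, $0\alpha=\alpha0=0$, $\{1,-1\}$ is exactly the solution set of $x^2=1$, and $(F\setminus\{0\},\cdot)$ is a group; $-\alpha:=(-1)\alpha$. A left near-field $(F,\boxplus,\cdot)$: $(F,\boxplus)$ a group with identity $0$, $(F\setminus\{0\},\cdot)$ a group, $0\cdot\alpha=0$, $\gamma(\alpha\boxplus\beta)=\gamma\alpha\boxplus\gamma\beta$. A left near-field addition map on $(F,\cdot)$ is a map $\rho:F\to F$ such that (i) $\rho(0)=1$; (ii) $\rho(-1)=0$; (iii) $\rho(\alpha^{-1})=\alpha^{-1}\rho(\alpha)$ for all $\alpha\ne0$; (iv) $\rho(\alpha\rho(\beta))=\alpha\,\rho(\beta\,\rho((\alpha\beta)^{-1}))$ for all $\alpha,\beta\ne0$. *)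

theory Defs
  imports Main
begin

text \<open>A scalar group (F, mul, e, z, m) on the whole type 'a:
  e plays the role of 1, z of 0, m of -1.\<close>
definition scalar_group :: "('a \<Rightarrow> 'a \<Rightarrow> 'a) \<Rightarrow> 'a \<Rightarrow> 'a \<Rightarrow> 'a \<Rightarrow> bool" where
  "scalar_group mul e z m \<longleftrightarrow>
     (\<forall>a b c. mul (mul a b) c = mul a (mul b c)) \<and>
     (\<forall>a. mul e a = a \<and> mul a e = a) \<and>
     z \<noteq> e \<and>
     (\<forall>a. mul z a = z \<and> mul a z = z) \<and>
     {x. mul x x = e} = {e, m} \<and>
     (\<forall>a b. a \<noteq> z \<longrightarrow> b \<noteq> z \<longrightarrow> mul a b \<noteq> z) \<and>
     (\<forall>a. a \<noteq> z \<longrightarrow> (\<exists>b. b \<noteq> z \<and> mul a b = e \<and> mul b a = e))"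

text \<open>Multiplicative inverse (meaningful for nonzero arguments).\<close>
definition sinv :: "('a \<Rightarrow> 'a \<Rightarrow> 'a) \<Rightarrow> 'a \<Rightarrow> 'a \<Rightarrow> 'a" where
  "sinv mul e a = (THE b. mul a b = e \<and> mul b a = e)"

definition left_near_field :: "('a \<Rightarrow> 'a \<Rightarrow> 'a) \<Rightarrow> ('a \<Rightarrow> 'a \<Rightarrow> 'a) \<Rightarrow> 'a \<Rightarrow> bool" where
  "left_near_field add mul z \<longleftrightarrow>
     \<comment> \<open>(F, add) is a group with identity z\<close>
     (\<forall>a b c. add (add a b) c = add a (add b c)) \<and>
     (\<forall>a. add z a = a \<and> add a z = a) \<and>
     (\<forall>a. \<exists>b. add a b = z \<and> add b a = z) \<and>
     \<comment> \<open>(F - {z}, mul) is a group\<close>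
     (\<forall>a b. a \<noteq> z \<longrightarrow> b \<noteq> z \<longrightarrow> mul a b \<noteq> z) \<and>
     (\<forall>a b c. a \<noteq> z \<longrightarrow> b \<noteq> z \<longrightarrow> c \<noteq> z \<longrightarrow> mul (mul a b) c = mul a (mul b c)) \<and>
     (\<exists>e. e \<noteq> z \<and> (\<forall>a. a \<noteq> z \<longrightarrow> mul e a = a \<and> mul a e = a) \<and>
          (\<forall>a. a \<noteq> z \<longrightarrow> (\<exists>b. b \<noteq> z \<and> mul a b = e \<and> mul b a = e))) \<and>
     \<comment> \<open>0 * a = 0\<close>
     (\<forall>a. mul z a = z) \<and>
     \<comment> \<open>left distributivity\<close>
     (\<forall>a b c. mul c (add a b) = add (mul c a) (mul c b))"

definition lnf_addition_map ::
    "('a \<Rightarrow> 'a \<Rightarrow> 'a) \<Rightarrow> 'a \<Rightarrow> 'a \<Rightarrow> 'a \<Rightarrow> ('a \<Rightarrow> 'a) \<Rightarrow> bool" where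
  "lnf_addition_map mul e z m \<rho> \<longleftrightarrow>
     \<rho> z = e \<and>
     \<rho> m = z \<and>
     (\<forall>a. a \<noteq> z \<longrightarrow> \<rho> (sinv mul e a) = mul (sinv mul e a) (\<rho> a)) \<and>
     (\<forall>a b. a \<noteq> z \<longrightarrow> b \<noteq> z \<longrightarrow>
        \<rho> (mul a (\<rho> b)) = mul a (\<rho> (mul b (\<rho> (sinv mul e (mul a b))))))"

definition rho_add :: "('a \<Rightarrow> 'a \<Rightarrow> 'a) \<Rightarrow> 'a \<Rightarrow> 'a \<Rightarrow> ('a \<Rightarrow> 'a) \<Rightarrow> 'a \<Rightarrow> 'a \<Rightarrow> 'a" where
  "rho_add mul e z \<rho> a b = (if a = z then b else mul a (\<rho> (mul (sinv mul e a) b)))"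

end

theory Submission
  imports Defs
begin

unbundle no converse_syntax

text \<open>
  (1) In a left near-field whose multiplicative structure is a scalar group, the additive inverse
  \<open>n\<close> of \<open>1\<close> satisfies \<open>n\<cdot>n = 1\<close> and \<open>a \<boxplus> a\<cdot>n = 0\<close>. If \<open>n = 1\<close> every element is its own
  additive inverse, so addition is commutative; otherwise \<open>n = -1\<close>, which is central, and then
  \<open>a\<cdot>n \<boxplus> b\<cdot>n = n\<cdot>(a \<boxplus> b) = (a \<boxplus> b)\<cdot>n = b\<cdot>n \<boxplus> a\<cdot>n\<close> again gives commutativity. Commutativity
  forces \<open>1 \<boxplus> -1 = 0\<close>, and the axioms of an addition map for \<open>\<rho> a = 1 \<boxplus> a\<close> are then left
  distributivity, commutativity and associativity in disguise.

  (2) Conversely, \<open>\<boxplus>\<^sub>\<rho>\<close> is left distributive by construction. Axiom (iii) makes it commutative,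
  axiom (iv) says \<open>1 \<boxplus> (a \<boxplus> b) = a \<boxplus> (1 \<boxplus> b)\<close>, which scales by distributivity to
  left-commutativity, and commutativity plus left-commutativity give associativity.
  Axiom (ii) provides the additive inverse \<open>a\<cdot>(-1)\<close> of \<open>a\<close>.
\<close>

locale scalar_grp =
  fixes mul :: "'a \<Rightarrow> 'a \<Rightarrow> 'a" (infixl "\<cdot>" 70) and e z m :: 'a
  assumes scalar_group: "scalar_group mul e z m"
begin

abbreviation sinv_sg :: "'a \<Rightarrow> 'a" ("(_\<inverse>)" [1000] 999)
  where "a\<inverse> \<equiv> sinv mul e a"

lemma m_assoc: "(a \<cdot> b) \<cdot> c = a \<cdot> (b \<cdot> c)"
  using scalar_group unfolding scalar_group_def by blast

lemma l_one [simp]: "e \<cdot> a = a" and r_one [simp]: "a \<cdot> e = a"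
  using scalar_group unfolding scalar_group_def by blast+

lemma l_null [simp]: "z \<cdot> a = z" and r_null [simp]: "a \<cdot> z = z"
  using scalar_group unfolding scalar_group_def by blast+

lemma zero_not_one: "z \<noteq> e"
  using scalar_group unfolding scalar_group_def by blast

lemma square_eq_one_iff: "a \<cdot> a = e \<longleftrightarrow> a = e \<or> a = m"
proof -
  have "{x. x \<cdot> x = e} = {e, m}"
    using scalar_group unfolding scalar_group_def by blast
  then show ?thesis by blast
qed

lemma neg_one_square: "m \<cdot> m = e"
  using square_eq_one_iff by simp

lemma integral: "a \<noteq> z \<Longrightarrow> b \<noteq> z \<Longrightarrow> a \<cdot> b \<noteq> z"
  using scalar_group unfolding scalar_group_def by blast

lemma sinv_equality:
  assumes "a \<cdot> b = e" and "b \<cdot> a = e"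
  shows "a\<inverse> = b"
  unfolding sinv_def
proof (rule the_equality)
  fix c assume c: "a \<cdot> c = e \<and> c \<cdot> a = e"
  have "c = c \<cdot> (a \<cdot> b)" using assms by simp
  also have "\<dots> = b" using c by (simp flip: m_assoc)
  finally show "c = b" .
qed (use assms in blast)

lemma r_inv: "a \<noteq> z \<Longrightarrow> a \<cdot> a\<inverse> = e" and l_inv: "a \<noteq> z \<Longrightarrow> a\<inverse> \<cdot> a = e"
  using scalar_group sinv_equality unfolding scalar_group_def by metis+

lemma sinv_nonzero: "a \<noteq> z \<Longrightarrow> a\<inverse> \<noteq> z"
  by (metis r_inv r_null zero_not_one)

lemma sinv_mul_cancel_left: "a \<noteq> z \<Longrightarrow> a\<inverse> \<cdot> (a \<cdot> b) = b"
  by (simp add: l_inv flip: m_assoc)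

lemma mul_sinv_cancel_left: "a \<noteq> z \<Longrightarrow> a \<cdot> (a\<inverse> \<cdot> b) = b"
  by (simp add: r_inv flip: m_assoc)

lemma sinv_unique: "a \<noteq> z \<Longrightarrow> a \<cdot> c = e \<Longrightarrow> a\<inverse> = c"
  by (metis r_one sinv_mul_cancel_left)

lemma sinv_mult_distrib: "a \<noteq> z \<Longrightarrow> b \<noteq> z \<Longrightarrow> (a \<cdot> b)\<inverse> = b\<inverse> \<cdot> a\<inverse>"
  by (rule sinv_unique) (simp_all add: integral m_assoc mul_sinv_cancel_left r_inv)

lemma sinv_sinv: "a \<noteq> z \<Longrightarrow> (a\<inverse>)\<inverse> = a"
  using sinv_unique[of "a\<inverse>" a] sinv_nonzero l_inv by blast

end

locale scalar_grp_addition_map = scalar_grp +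
  fixes \<rho> :: "'a \<Rightarrow> 'a"
  assumes addition_map: "lnf_addition_map mul e z m \<rho>"
begin

abbreviation rho_plus :: "'a \<Rightarrow> 'a \<Rightarrow> 'a" (infixl "\<boxplus>" 65)
  where "a \<boxplus> b \<equiv> rho_add mul e z \<rho> a b"

lemma rho_zero: "\<rho> z = e" and rho_neg_one: "\<rho> m = z"
  using addition_map unfolding lnf_addition_map_def by blast+

lemma rho_sinv: "a \<noteq> z \<Longrightarrow> \<rho> (a\<inverse>) = a\<inverse> \<cdot> \<rho> a"
  using addition_map unfolding lnf_addition_map_def by blast

lemma rho_mul_rho:
  "a \<noteq> z \<Longrightarrow> b \<noteq> z \<Longrightarrow> \<rho> (a \<cdot> \<rho> b) = a \<cdot> \<rho> (b \<cdot> \<rho> ((a \<cdot> b)\<inverse>))"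
  using addition_map unfolding lnf_addition_map_def by blast

lemma rho_add_zero_left [simp]: "z \<boxplus> b = b"
  unfolding rho_add_def by simp

lemma rho_add_nonzero: "a \<noteq> z \<Longrightarrow> a \<boxplus> b = a \<cdot> \<rho> (a\<inverse> \<cdot> b)"
  unfolding rho_add_def by simp

lemma rho_add_zero_right [simp]: "a \<boxplus> z = a"
  by (cases "a = z") (simp_all add: rho_add_nonzero rho_zero)

lemma rho_add_one_left: "e \<boxplus> b = \<rho> b"
  using zero_not_one by (simp add: rho_add_nonzero sinv_unique)

lemma rho_add_distrib_left: "c \<cdot> (a \<boxplus> b) = c \<cdot> a \<boxplus> c \<cdot> b"
proof (cases "c = z \<or> a = z")
  case False
  then have "(c \<cdot> a)\<inverse> \<cdot> (c \<cdot> b) = a\<inverse> \<cdot> b"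
    by (simp add: sinv_mult_distrib m_assoc sinv_mul_cancel_left)
  with False show ?thesis
    by (simp add: rho_add_nonzero integral m_assoc)
qed auto

lemma rho_add_commute: "a \<boxplus> b = b \<boxplus> a"
proof (cases "a = z \<or> b = z")
  case False
  then have a: "a \<noteq> z" and b: "b \<noteq> z" by auto
  define x where "x = a\<inverse> \<cdot> b"
  have x: "x \<noteq> z" using a b by (simp add: x_def integral sinv_nonzero)
  have sinv_x: "x\<inverse> = b\<inverse> \<cdot> a"
    using a b by (simp add: x_def sinv_mult_distrib sinv_nonzero sinv_sinv)
  have "b \<boxplus> a = b \<cdot> \<rho> (x\<inverse>)" using b sinv_x by (simp add: rho_add_nonzero)
  also have "\<dots> = b \<cdot> (b\<inverse> \<cdot> a \<cdot> \<rho> x)" using rho_sinv[OF x] sinv_x by simp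
  also have "\<dots> = a \<boxplus> b" using a b by (simp add: rho_add_nonzero x_def m_assoc mul_sinv_cancel_left)
  finally show ?thesis by simp
qed auto

text \<open>Axiom (iv) at \<open>a\<close> and \<open>a\<inverse>\<cdot>b\<close>, rewritten via \<open>\<rho> x = 1 \<boxplus> x\<close> and \<open>x \<boxplus> y = x\<cdot>\<rho>(x\<inverse>\<cdot>y)\<close>.\<close>

lemma rho_add_left_commute_one: "e \<boxplus> (a \<boxplus> b) = a \<boxplus> (e \<boxplus> b)"
proof (cases "a = z \<or> b = z")
  case False
  then have a: "a \<noteq> z" and b: "b \<noteq> z" by auto
  define c where "c = a\<inverse> \<cdot> b"
  have c: "c \<noteq> z" using a b by (simp add: c_def integral sinv_nonzero)
  have ac: "a \<cdot> c = b" using a by (simp add: c_def mul_sinv_cancel_left)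
  have "c \<cdot> b\<inverse> = a\<inverse>" using a b by (simp add: c_def m_assoc r_inv)
  then have "c \<cdot> \<rho> (b\<inverse>) = c \<boxplus> a\<inverse>"
    using c by (metis rho_add_nonzero sinv_mul_cancel_left)
  moreover have "a \<cdot> \<rho> c = a \<boxplus> b" using a by (simp add: rho_add_nonzero c_def)
  ultimately have "e \<boxplus> (a \<boxplus> b) = a \<cdot> (e \<boxplus> (c \<boxplus> a\<inverse>))"
    using rho_mul_rho[OF a c] ac by (simp add: rho_add_one_left)
  also have "\<dots> = a \<boxplus> (b \<boxplus> e)"
    using a ac by (simp add: rho_add_distrib_left r_inv)
  finally show ?thesis by (simp add: rho_add_commute)
qed (auto simp: rho_add_commute)

lemma rho_add_left_commute: "a \<boxplus> (b \<boxplus> c) = b \<boxplus> (a \<boxplus> c)"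
proof (cases "a = z")
  case False
  define b' c' where "b' = a\<inverse> \<cdot> b" and "c' = a\<inverse> \<cdot> c"
  have scaled: "b = a \<cdot> b'" "c = a \<cdot> c'"
    using False by (simp_all add: b'_def c'_def mul_sinv_cancel_left)
  have "a \<boxplus> (b \<boxplus> c) = a \<cdot> (e \<boxplus> (b' \<boxplus> c'))"
    by (simp add: scaled rho_add_distrib_left)
  also have "\<dots> = a \<cdot> (b' \<boxplus> (e \<boxplus> c'))" by (simp add: rho_add_left_commute_one)
  also have "\<dots> = b \<boxplus> (a \<boxplus> c)" by (simp add: scaled rho_add_distrib_left)
  finally show ?thesis .
qed simp

lemma rho_add_assoc: "(a \<boxplus> b) \<boxplus> c = a \<boxplus> (b \<boxplus> c)"
  by (metis rho_add_commute rho_add_left_commute)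

lemma rho_add_neg: "a \<boxplus> a \<cdot> m = z"
  by (cases "a = z") (simp_all add: rho_add_nonzero sinv_mul_cancel_left rho_neg_one)

lemma left_near_field_rho_add: "left_near_field (\<boxplus>) mul z"
  unfolding left_near_field_def
proof (intro conjI allI impI)
  fix a show "\<exists>b. a \<boxplus> b = z \<and> b \<boxplus> a = z"
    using rho_add_neg rho_add_commute by metis
next
  show "\<exists>e'. e' \<noteq> z \<and> (\<forall>a. a \<noteq> z \<longrightarrow> e' \<cdot> a = a \<and> a \<cdot> e' = a) \<and>
          (\<forall>a. a \<noteq> z \<longrightarrow> (\<exists>b. b \<noteq> z \<and> a \<cdot> b = e' \<and> b \<cdot> a = e'))"
    using zero_not_one scalar_group unfolding scalar_group_def by (intro exI[of _ e]) auto
qed (auto simp: rho_add_assoc rho_add_distrib_left integral m_assoc)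

end

locale scalar_grp_near_field = scalar_grp +
  fixes add :: "'a \<Rightarrow> 'a \<Rightarrow> 'a" (infixl "\<boxplus>" 65)
  assumes left_near_field: "left_near_field add mul z"
begin

lemma a_assoc: "(a \<boxplus> b) \<boxplus> c = a \<boxplus> (b \<boxplus> c)"
  using left_near_field unfolding left_near_field_def by simp

lemma l_zero [simp]: "z \<boxplus> a = a" and r_zero [simp]: "a \<boxplus> z = a"
  using left_near_field unfolding left_near_field_def by simp_all

lemma r_neg_ex: "\<exists>b. a \<boxplus> b = z"
  using left_near_field unfolding left_near_field_def by meson

lemma r_distr: "c \<cdot> (a \<boxplus> b) = c \<cdot> a \<boxplus> c \<cdot> b"
  using left_near_field unfolding left_near_field_def by simp

lemma a_l_cancel: "a \<boxplus> x = a \<boxplus> y \<Longrightarrow> x = y"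
  by (metis a_assoc l_zero r_neg_ex)

lemma r_neg_imp_l_neg: "a \<boxplus> b = z \<Longrightarrow> b \<boxplus> a = z"
  by (metis a_assoc r_zero r_neg_ex)

lemma a_comm_of_self_inverse:
  assumes self_inverse: "\<And>x. x \<boxplus> x = z"
  shows "a \<boxplus> b = b \<boxplus> a"
proof -
  have "b \<boxplus> a = (b \<boxplus> a) \<boxplus> ((a \<boxplus> b) \<boxplus> (a \<boxplus> b))" by (simp add: self_inverse)
  also have "\<dots> = b \<boxplus> ((a \<boxplus> a) \<boxplus> (b \<boxplus> (a \<boxplus> b)))" by (simp add: a_assoc)
  also have "\<dots> = b \<boxplus> (b \<boxplus> (a \<boxplus> b))" by (simp add: self_inverse)
  also have "\<dots> = (b \<boxplus> b) \<boxplus> (a \<boxplus> b)" by (simp only: a_assoc)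
  also have "\<dots> = a \<boxplus> b" by (simp add: self_inverse)
  finally show ?thesis by simp
qed

context
  fixes n assumes one_add_n: "e \<boxplus> n = z"
begin

lemma add_mul_n: "a \<boxplus> a \<cdot> n = z"
  by (metis one_add_n r_distr r_null r_one)

lemma n_square: "n \<cdot> n = e"
  by (metis a_l_cancel add_mul_n one_add_n r_neg_imp_l_neg)

lemma add_mul_n_cancel: "a \<boxplus> (a \<cdot> n \<boxplus> c) = c"
  by (simp add: add_mul_n flip: a_assoc)

lemma add_mul_n_rev: "(a \<boxplus> b) \<cdot> n = b \<cdot> n \<boxplus> a \<cdot> n"
proof (rule a_l_cancel[symmetric])
  have "(a \<boxplus> b) \<boxplus> (b \<cdot> n \<boxplus> a \<cdot> n) = z"
    by (simp add: a_assoc add_mul_n_cancel add_mul_n)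
  then show "(a \<boxplus> b) \<boxplus> (b \<cdot> n \<boxplus> a \<cdot> n) = (a \<boxplus> b) \<boxplus> (a \<boxplus> b) \<cdot> n"
    by (simp add: add_mul_n)
qed

text \<open>\<open>x\<cdot>n\<cdot>x\<inverse>\<close> is a square root of \<open>1\<close> other than \<open>1\<close>, and \<open>n = -1\<close> is the only one.\<close>

lemma n_central:
  assumes "n \<noteq> e"
  shows "x \<cdot> n = n \<cdot> x"
proof (cases "x = z")
  case False
  define y where "y = x \<cdot> n \<cdot> x\<inverse>"
  have yx: "y \<cdot> x = x \<cdot> n"
    using False by (simp add: y_def m_assoc l_inv)
  have "y \<cdot> y = e"
    using False by (simp add: y_def m_assoc sinv_mul_cancel_left n_square r_inv flip: m_assoc[of n n])
  moreover have "y \<noteq> e"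
    using False assms yx by (metis r_one sinv_mul_cancel_left l_one)
  ultimately have "y = n"
    using assms n_square square_eq_one_iff by blast
  with yx show ?thesis by simp
qed simp

end

lemma a_comm: "a \<boxplus> b = b \<boxplus> a"
proof -
  obtain n where n: "e \<boxplus> n = z" using r_neg_ex by blast
  show ?thesis
  proof (cases "n = e")
    case True
    then show ?thesis using add_mul_n[OF n] by (intro a_comm_of_self_inverse) (metis r_one)
  next
    case False
    have swap: "x \<cdot> n \<boxplus> y \<cdot> n = y \<cdot> n \<boxplus> x \<cdot> n" for x y
    proof -
      have "x \<cdot> n \<boxplus> y \<cdot> n = n \<cdot> (x \<boxplus> y)"
        by (simp add: n_central[OF n False] r_distr)
      also have "\<dots> = y \<cdot> n \<boxplus> x \<cdot> n"
        by (simp add: add_mul_n_rev[OF n] flip: n_central[OF n False])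
      finally show ?thesis .
    qed
    have "x \<cdot> n \<cdot> n = x" for x by (simp add: m_assoc n_square[OF n])
    then show ?thesis using swap[of "a \<cdot> n" "b \<cdot> n"] by simp
  qed
qed

lemma one_add_neg_one: "e \<boxplus> m = z"
proof -
  obtain n where n: "e \<boxplus> n = z" using r_neg_ex by blast
  have "n = m"
  proof (cases "n = e")
    case False
    then show ?thesis using n_square[OF n] square_eq_one_iff by blast
  next
    case True
    have fixed: "m \<cdot> (m \<boxplus> e) = m \<boxplus> e"
      by (simp add: r_distr neg_one_square a_comm)
    show ?thesis
    proof (cases "m \<boxplus> e = z")
      case True
      then show ?thesis using n a_comm a_l_cancel by metis
    next
      case False
      then have "m = e" using fixed by (metis r_inv m_assoc r_one)
      with \<open>n = e\<close> show ?thesis by simp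
    qed
  qed
  with n show ?thesis by simp
qed

lemma lnf_addition_map_one_add: "lnf_addition_map mul e z m (\<lambda>a. e \<boxplus> a)"
  unfolding lnf_addition_map_def
proof (intro conjI allI impI)
  show "e \<boxplus> m = z" by (rule one_add_neg_one)
next
  fix a assume "a \<noteq> z"
  then show "e \<boxplus> a\<inverse> = a\<inverse> \<cdot> (e \<boxplus> a)"
    by (simp add: r_distr l_inv a_comm)
next
  fix a b assume a: "a \<noteq> z" and b: "b \<noteq> z"
  have "b \<cdot> (a \<cdot> b)\<inverse> = a\<inverse>"
    using a b by (simp add: sinv_mult_distrib mul_sinv_cancel_left)
  then have "a \<cdot> (e \<boxplus> b \<cdot> (e \<boxplus> (a \<cdot> b)\<inverse>)) = a \<boxplus> (a \<cdot> b \<boxplus> e)"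
    using a by (simp add: r_distr m_assoc r_inv)
  also have "\<dots> = e \<boxplus> a \<cdot> (e \<boxplus> b)"
    by (simp add: r_distr a_comm a_assoc) (metis a_assoc a_comm)
  finally show "e \<boxplus> a \<cdot> (e \<boxplus> b) = a \<cdot> (e \<boxplus> b \<cdot> (e \<boxplus> (a \<cdot> b)\<inverse>))" by simp
qed simp

end

theorem mainTheorem14:
  fixes mul :: "'a \<Rightarrow> 'a \<Rightarrow> 'a" and e z m :: 'a
  assumes "scalar_group mul e z m"
  shows "(\<forall>add. left_near_field add mul z \<longrightarrow> lnf_addition_map mul e z m (\<lambda>a. add e a))
     \<and> (\<forall>\<rho>. lnf_addition_map mul e z m \<rho> \<longrightarrow> left_near_field (rho_add mul e z \<rho>) mul z)"
proof (intro conjI allI impI)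
  fix add assume "left_near_field add mul z"
  then interpret scalar_grp_near_field mul e z m add
    using assms by unfold_locales
  show "lnf_addition_map mul e z m (\<lambda>a. add e a)" by (rule lnf_addition_map_one_add)
next
  fix \<rho> assume "lnf_addition_map mul e z m \<rho>"
  then interpret scalar_grp_addition_map mul e z m \<rho>
    using assms by unfold_locales
  show "left_near_field (rho_add mul e z \<rho>) mul z" by (rule left_near_field_rho_add)
qed

end
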